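(* Let $D\ge 2$ be an integer. For all sufficiently large $n$ the following holds. Let $1\le t\le n$, let $\Gamma\sim\Gamma(n,D)$ be the random block model with vertex set $W$, and let $\mathcal{B}$ be a (fixed) well-behaved multiset of $t$ subsets of $W$. Fix $1\le k\le N$ and any vertex $u\in W_k\setminus\bigcup\mathcal{B}$, and let $\mathcal{E}$ be the event that there exists $B\in\mathcal{B}$ such that $u\in N_\Gamma(B)$. Then \[\Pr(\mathcal{E})\ge \min\Big\{\frac14,\; t\,n^{D^{1-k}-1}(\log n)^2(\log\log n)^D\Big\}.\]
   Context: Random block model $\Gamma(n,D)$ (for integers $D\ge 2$, $n$; $\log$ is the natural logarithm; rounding to integers is ignored). Let $N$ be the smallest integer with $n^{D^{1-N}}\le 3^{D^2}$. For $1\le i,k\le N$ let \[p_{i,k}=\min\big\{n^{-D^{-1}+D^{-i}+D^{-k}}(\log n)^{2/D}(\log\log n)^3,\,1\big\},\qquad \Delta_i=n^{D^{1-i}}.\] The vertex set is $W=W_1\,\dot\cup\cdots\dot\cup\, W_N$ with pairwise disjoint blocks of sizes $|W_k|=100\cdot 3^D n^{1-D^{-k}}$. For each pair of distinct vertices $u\in W_i$, $v\in W_k$ (possibly $i=k$), $uv$ is an edge independently with probability $p_{i,k}$. Each block $W_k$ is partitioned into sub-blocks $W_{k,1}$ of size $\frac12|W_k|$ and $W_{k,2},\dots,W_{k,\log n}$, each of size at least $\frac{1}{2\log n}|W_k|$. Well-behaved: for $1\le t\le n$, a multiset $\mathcal{B}=\{B_i\}_{i=1}^t$ with each $B_i\subseteq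 W$ is well-behaved if (NB1) $|B_i|\le D$ for all $i$; (NB2) for all $1\le k\le N$ and all $u\in W_k$, $|\{i\in[t]: u\in B_i\}|\le \Delta_k$; (NB3) for each $1\le k\le N$ and $1\le j\le \log n$, $|\bigcup\mathcal{B}\cap W_{k,j}|\le\frac12|W_{k,j}|$. Here $\bigcup\mathcal{B}=\bigcup_i B_i$. $N_\Gamma(B)$ denotes the common neighbourhood of $B$ in $\Gamma$ (the set of vertices adjacent to every vertex of $B$), with $N_\Gamma(\emptyset)$ being all vertices. *)

theory Defs
  imports "HOL-Probability.Probability" "HOL-Library.Multiset"
begin

type_synonym vtx = "nat \<times> nat"   (* (block index k, position within block) *)

definition numBlocks :: "nat \<Rightarrow> nat \<Rightarrow> nat" where
  "numBlocks n D = (LEAST N::nat. real n powr (real D powr (1 - real N)) \<le> 3 ^ (D^2))"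

definition edgeP :: "nat \<Rightarrow> nat \<Rightarrow> nat \<Rightarrow> nat \<Rightarrow> real" where
  "edgeP n D i k = min (real n powr (- 1 / real D + real D powr (- real i) + real D powr (- real k))
      * ln (real n) powr (2 / real D) * (ln (ln (real n)))^3) 1"

definition Delta :: "nat \<Rightarrow> nat \<Rightarrow> nat \<Rightarrow> real" where
  "Delta n D i = real n powr (real D powr (1 - real i))"

definition blockSize :: "nat \<Rightarrow> nat \<Rightarrow> nat \<Rightarrow> nat" where
  "blockSize n D k = nat \<lceil>100 * 3 ^ D * real n powr (1 - real D powr (- real k))\<rceil>"

definition Wset :: "nat \<Rightarrow> nat \<Rightarrow> vtx set" where
  "Wset n D = {(k, j). 1 \<le> k \<and> k \<le> numBlocks n D \<and> j < blockSize n D k}"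

definition block :: "nat \<Rightarrow> nat \<Rightarrow> nat \<Rightarrow> vtx set" where
  "block n D k = {v \<in> Wset n D. fst v = k}"

definition potEdges :: "nat \<Rightarrow> nat \<Rightarrow> vtx set set" where
  "potEdges n D = {{x, y} | x y. x \<in> Wset n D \<and> y \<in> Wset n D \<and> x \<noteq> y}"

definition edgeProb :: "nat \<Rightarrow> nat \<Rightarrow> vtx set \<Rightarrow> real" where
  "edgeProb n D e = edgeP n D (Min (fst ` e)) (Max (fst ` e))"

definition blockModel :: "nat \<Rightarrow> nat \<Rightarrow> (vtx set \<Rightarrow> bool) pmf" where
  "blockModel n D = Pi_pmf (potEdges n D) False (\<lambda>e. bernoulli_pmf (edgeProb n D e))"

definition adj :: "(vtx set \<Rightarrow> bool) \<Rightarrow> vtx \<Rightarrow> vtx \<Rightarrow> bool" where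
  "adj \<Gamma> u v = (u \<noteq> v \<and> \<Gamma> {u, v})"

(* common neighbourhood N_Gamma(B); N_Gamma({}) = W *)
definition commonNbr :: "nat \<Rightarrow> nat \<Rightarrow> (vtx set \<Rightarrow> bool) \<Rightarrow> vtx set \<Rightarrow> vtx set" where
  "commonNbr n D \<Gamma> B = {v \<in> Wset n D. \<forall>b\<in>B. adj \<Gamma> b v}"

definition numSub :: "nat \<Rightarrow> nat" where
  "numSub n = nat \<lfloor>ln (real n)\<rfloor>"

definition subBlock :: "nat \<Rightarrow> nat \<Rightarrow> (vtx \<Rightarrow> nat) \<Rightarrow> nat \<Rightarrow> nat \<Rightarrow> vtx set" where
  "subBlock n D sb k j = {v \<in> block n D k. sb v = j}"

definition validPartition :: "nat \<Rightarrow> nat \<Rightarrow> (vtx \<Rightarrow> nat) \<Rightarrow> bool" where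
  "validPartition n D sb \<longleftrightarrow>
     (\<forall>v \<in> Wset n D. 1 \<le> sb v \<and> sb v \<le> numSub n) \<and>
     (\<forall>k. 1 \<le> k \<and> k \<le> numBlocks n D \<longrightarrow>
        card (subBlock n D sb k 1) = blockSize n D k div 2 \<and>
        (\<forall>j. 2 \<le> j \<and> j \<le> numSub n \<longrightarrow>
           real (card (subBlock n D sb k j)) \<ge> real (blockSize n D k) / (2 * ln (real n))))"

definition wellBehaved :: "nat \<Rightarrow> nat \<Rightarrow> (vtx \<Rightarrow> nat) \<Rightarrow> vtx set multiset \<Rightarrow> bool" where
  "wellBehaved n D sb \<B> \<longleftrightarrow>
     1 \<le> size \<B> \<and> size \<B> \<le> n \<and>
     (\<forall>B \<in># \<B>. B \<subseteq> Wset n D) \<and>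
     (\<forall>B \<in># \<B>. card B \<le> D) \<and>
     (\<forall>k. 1 \<le> k \<and> k \<le> numBlocks n D \<longrightarrow> (\<forall>u \<in> block n D k.
        real (size (filter_mset (\<lambda>B. u \<in> B) \<B>)) \<le> Delta n D k)) \<and>
     (\<forall>k j. 1 \<le> k \<and> k \<le> numBlocks n D \<and> 1 \<le> j \<and> j \<le> numSub n \<longrightarrow>
        real (card (\<Union>(set_mset \<B>) \<inter> subBlock n D sb k j))
          \<le> real (card (subBlock n D sb k j)) / 2)"

end

theory Submission
  imports Defs "HOL-Real_Asymp.Real_Asymp"
begin

(* Let A_B be the event that u is adjacent to every vertex of B. Since the edges are independent,
   P(A_B) = Q(B) and P(A_B \<inter> A_B') = Q(B \<union> B'), where Q(S) is the product over v \<in> S of the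
   edge probabilities min (y n^(D^-i)) 1, i being the block of v. The second moment bound
   (Cauchy-Schwarz for Z = \<Sum> c_B 1_(A_B) against the indicator of the union) with the weights
   c_B = y^D / Q(B) gives E Z = t y^D =: \<mu> and E(Z^2) = \<Sum> y^D y^D / Q(B \<inter> B').
   As (y n^(D^-i))^D = y^D \<Delta>_i and |B \<inter> B'| \<le> D, the smallest factor of Q(C) below 1 already
   yields y^D / Q(C) \<le> y^D + \<Sum>_(w \<in> C) 1/\<Delta>_(block of w), and by (NB2) these correction terms
   add up to at most |B| \<le> D over all B'. Hence P(\<Union> A_B) \<ge> \<mu> / (\<mu> + D), which is at least 1/2
   if \<mu> \<ge> D and at least \<mu> / (log log n)^(2D) otherwise. *)

lemma sq_le_of_quadratic_nonneg:
  fixes P S \<mu> :: real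
  assumes "0 \<le> P" and quad: "\<And>a. 0 \<le> P * a\<^sup>2 - 2 * \<mu> * a + S"
  shows "\<mu>\<^sup>2 \<le> P * S"
proof (cases "P = 0")
  case True
  have "\<mu> = 0"
  proof (rule ccontr)
    assume "\<mu> \<noteq> 0"
    then show False using quad[of "(S + 1) / (2 * \<mu>)"] True by (simp add: field_simps)
  qed
  then show ?thesis using True by simp
next
  case False
  then have "0 < P" using \<open>0 \<le> P\<close> by simp
  then show ?thesis using quad[of "\<mu> / P"] by (simp add: field_simps power2_eq_square)
qed

lemma (in prob_space) prob_Union_second_moment:
  fixes c :: "'i \<Rightarrow> real"
  assumes "finite I" and events: "\<And>i. i \<in> I \<Longrightarrow> A i \<in> events"
  shows "(\<Sum>i\<in>I. c i * prob (A i))\<^sup>2 \<le>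
           prob (\<Union>i\<in>I. A i) * (\<Sum>i\<in>I. \<Sum>j\<in>I. c i * c j * prob (A i \<inter> A j))"
proof (rule sq_le_of_quadratic_nonneg)
  define U where "U = (\<Union>i\<in>I. A i)"
  define Z where "Z = (\<lambda>x. \<Sum>i\<in>I. c i * indicator (A i) x :: real)"
  have U: "U \<in> events" using \<open>finite I\<close> events by (auto simp: U_def)
  have indicator_events: "integrable M (indicator X :: 'a \<Rightarrow> real)" "expectation (indicator X) = prob X"
    if "X \<in> events" for X
    using that by (simp_all add: less_top[symmetric])
  fix a :: real
  have expand: "(Z x - a * indicator U x)\<^sup>2 =
      (\<Sum>i\<in>I. \<Sum>j\<in>I. c i * c j * indicator (A i \<inter> A j) x) - 2 * a * Z x + a\<^sup>2 * indicator U x" for x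
  proof -
    have "Z x * indicator U x = Z x"
      by (auto simp: Z_def U_def indicator_def intro!: sum.neutral)
    moreover have "(Z x)\<^sup>2 = (\<Sum>i\<in>I. \<Sum>j\<in>I. c i * c j * indicator (A i \<inter> A j) x)"
      unfolding Z_def power2_eq_square sum_product by (intro sum.cong refl) (simp add: indicator_def)
    ultimately show ?thesis by (simp add: power2_eq_square algebra_simps indicator_times_eq_if)
  qed
  have "0 \<le> expectation (\<lambda>x. (\<Sum>i\<in>I. \<Sum>j\<in>I. c i * c j * indicator (A i \<inter> A j) x)
                              - 2 * a * Z x + a\<^sup>2 * indicator U x)"
    by (intro integral_nonneg_AE AE_I2) (metis expand zero_le_power2)
  also have "\<dots> = (\<Sum>i\<in>I. \<Sum>j\<in>I. c i * c j * prob (A i \<inter> A j))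
                    - 2 * a * (\<Sum>i\<in>I. c i * prob (A i)) + a\<^sup>2 * prob U"
    using U events
    by (simp add: Z_def indicator_events Bochner_Integration.integral_sum integral_add integral_diff)
  finally show "0 \<le> prob U * a\<^sup>2 - 2 * (\<Sum>i\<in>I. c i * prob (A i)) * a
                    + (\<Sum>i\<in>I. \<Sum>j\<in>I. c i * c j * prob (A i \<inter> A j))"
    by (simp add: algebra_simps)
qed simp

lemma (in prob_space) prob_Union_ge_of_second_moment:
  fixes c :: "'i \<Rightarrow> real"
  assumes "finite I" and "\<And>i. i \<in> I \<Longrightarrow> A i \<in> events" and "0 \<le> \<mu>" and "0 < d"
    and first_moment: "(\<Sum>i\<in>I. c i * prob (A i)) = \<mu>"
    and second_moment: "(\<Sum>i\<in>I. \<Sum>j\<in>I. c i * c j * prob (A i \<inter> A j)) \<le> \<mu> * (\<mu> + d)"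
  shows "\<mu> / (\<mu> + d) \<le> prob (\<Union>i\<in>I. A i)"
proof -
  have "\<mu>\<^sup>2 \<le> prob (\<Union>i\<in>I. A i) * (\<mu> * (\<mu> + d))"
    using prob_Union_second_moment[of I A c] assms
    by (simp add: mult_left_mono order_trans)
  then have "\<mu> * \<mu> \<le> \<mu> * (prob (\<Union>i\<in>I. A i) * (\<mu> + d))"
    by (simp add: power2_eq_square ac_simps)
  then have "\<mu> \<le> prob (\<Union>i\<in>I. A i) * (\<mu> + d)"
    using \<open>0 \<le> \<mu>\<close> \<open>0 < d\<close> by (cases "\<mu> = 0") auto
  then show ?thesis
    using \<open>0 \<le> \<mu>\<close> \<open>0 < d\<close> by (simp add: divide_le_eq)
qed

lemma measure_Pi_pmf_bernoulli_all:
  assumes "finite A" and "F \<subseteq> A" and p: "\<And>e. e \<in> F \<Longrightarrow> 0 \<le> p e \<and> p e \<le> 1"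
  shows "measure_pmf.prob (Pi_pmf A dflt (\<lambda>e. bernoulli_pmf (p e))) {f. \<forall>e\<in>F. f e} = (\<Prod>e\<in>F. p e)"
proof -
  define B where "B = (\<lambda>e. if e \<in> F then {True} else UNIV)"
  have "{f. \<forall>e\<in>F. f e} = Pi A B"
    using \<open>F \<subseteq> A\<close> by (auto simp: B_def Pi_def)
  then have "measure_pmf.prob (Pi_pmf A dflt (\<lambda>e. bernoulli_pmf (p e))) {f. \<forall>e\<in>F. f e}
      = (\<Prod>e\<in>A. measure_pmf.prob (bernoulli_pmf (p e)) (B e))"
    using \<open>finite A\<close> by (simp add: measure_Pi_pmf_Pi)
  also have "\<dots> = (\<Prod>e\<in>A. if e \<in> F then p e else 1)"
    by (intro prod.cong refl) (auto simp: B_def measure_pmf_single p)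
  also have "\<dots> = (\<Prod>e\<in>F. p e)"
    using assms by (simp add: prod.If_cases Int_absorb1)
  finally show ?thesis .
qed

lemma div_prod_min_le:
  fixes x \<Delta> :: "'v \<Rightarrow> real"
  assumes "finite C" and "card C \<le> D" and "0 < y"
    and x_pos: "\<And>v. 0 < x v" and \<Delta>_pos: "\<And>v. 0 < \<Delta> v"
    and x_pow: "\<And>v. v \<in> C \<Longrightarrow> y ^ D * \<Delta> v \<le> x v ^ D"
  shows "y ^ D / (\<Prod>v\<in>C. min (x v) 1) \<le> y ^ D + (\<Sum>v\<in>C. 1 / \<Delta> v)"
proof -
  have sum_nonneg: "0 \<le> (\<Sum>v\<in>C. 1 / \<Delta> v)"
    by (intro sum_nonneg) (simp add: less_imp_le[OF \<Delta>_pos])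
  show ?thesis
  proof (cases "\<forall>v\<in>C. 1 \<le> x v")
    case True
    then show ?thesis
      using sum_nonneg by simp
  next
    case False
    obtain w where w: "w \<in> C" "\<And>v. v \<in> C \<Longrightarrow> x w \<le> x v"
      using False Min_in[of "x ` C"] Min_le[of "x ` C"] \<open>finite C\<close>
      by (metis empty_iff finite_imageI image_iff image_eqI)
    have "x w < 1"
      using False w by force
    have "x w ^ D \<le> x w ^ card C"
      using \<open>x w < 1\<close> \<open>card C \<le> D\<close> x_pos[of w] by (intro power_decreasing) auto
    also have "\<dots> \<le> (\<Prod>v\<in>C. min (x v) 1)"
      using w \<open>x w < 1\<close> x_pos[of w] by (auto intro!: prod_mono[of C "\<lambda>_. x w", simplified])
    finally have prod_ge: "x w ^ D \<le> (\<Prod>v\<in>C. min (x v) 1)" .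
    have "0 < x w ^ D"
      using x_pos[of w] by simp
    then have "y ^ D / (\<Prod>v\<in>C. min (x v) 1) \<le> y ^ D / x w ^ D"
      using prod_ge \<open>0 < y\<close> by (intro divide_left_mono) auto
    also have "\<dots> \<le> 1 / \<Delta> w"
      using x_pow[OF \<open>w \<in> C\<close>] x_pos[of w] \<Delta>_pos[of w] by (simp add: field_simps)
    also have "\<dots> \<le> (\<Sum>v\<in>C. 1 / \<Delta> v)"
      using w(1) \<open>finite C\<close> by (intro member_le_sum) (auto simp: less_imp_le[OF \<Delta>_pos])
    finally show ?thesis
      using \<open>0 < y\<close> by (intro add_increasing) auto
  qed
qed

lemma sum_inter_inverse_le_card:
  fixes B :: "nat \<Rightarrow> 'v set" and \<Delta> :: "'v \<Rightarrow> real"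
  assumes "finite C" and \<Delta>_pos: "\<And>w. 0 < \<Delta> w"
    and mult: "\<And>w. w \<in> C \<Longrightarrow> real (card {j. j < t \<and> w \<in> B j}) \<le> \<Delta> w"
  shows "(\<Sum>j<t. \<Sum>w\<in>C \<inter> B j. 1 / \<Delta> w) \<le> card C"
proof -
  have "(\<Sum>j<t. \<Sum>w\<in>C \<inter> B j. 1 / \<Delta> w) = (\<Sum>w\<in>C. \<Sum>j<t. if w \<in> B j then 1 / \<Delta> w else 0)"
    using \<open>finite C\<close> by (simp add: sum.inter_restrict sum.swap[of _ C])
  also have "\<dots> = (\<Sum>w\<in>C. real (card {j. j < t \<and> w \<in> B j}) / \<Delta> w)"
    by (intro sum.cong refl) (simp add: sum.If_cases lessThan_def Collect_conj_eq)
  also have "\<dots> \<le> (\<Sum>w\<in>C. 1)"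
    using mult \<Delta>_pos by (intro sum_mono) (simp add: divide_le_eq)
  finally show ?thesis
    by simp
qed

lemma sum_pair_ratio_le:
  fixes B :: "nat \<Rightarrow> 'v set" and x \<Delta> :: "'v \<Rightarrow> real"
  assumes "0 < y" and "\<And>v. 0 < x v" and \<Delta>_pos: "\<And>v. 0 < \<Delta> v"
    and "\<And>v. y ^ D * \<Delta> v \<le> x v ^ D"
    and B: "\<And>j. j < t \<Longrightarrow> finite (B j) \<and> card (B j) \<le> D"
    and mult: "\<And>w. real (card {j. j < t \<and> w \<in> B j}) \<le> \<Delta> w"
  shows "(\<Sum>j<t. \<Sum>j'<t. y ^ D / (\<Prod>v\<in>B j \<inter> B j'. min (x v) 1)) \<le> t * (t * y ^ D + D)"
proof -
  have row: "(\<Sum>j'<t. y ^ D / (\<Prod>v\<in>B j \<inter> B j'. min (x v) 1)) \<le> t * y ^ D + D" if "j < t" for j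
  proof -
    have "(\<Sum>j'<t. y ^ D / (\<Prod>v\<in>B j \<inter> B j'. min (x v) 1))
        \<le> (\<Sum>j'<t. y ^ D + (\<Sum>w\<in>B j \<inter> B j'. 1 / \<Delta> w))"
    proof (intro sum_mono div_prod_min_le)
      show "card (B j \<inter> B j') \<le> D" for j'
        using B[OF that] card_mono[of "B j" "B j \<inter> B j'"] by auto
    qed (use assms B[OF that] in auto)
    also have "\<dots> \<le> t * y ^ D + card (B j)"
      using B[OF that] \<Delta>_pos mult by (simp add: sum.distrib sum_inter_inverse_le_card)
    also have "\<dots> \<le> t * y ^ D + D"
      using B[OF that] by simp
    finally show ?thesis .
  qed
  have "(\<Sum>j<t. \<Sum>j'<t. y ^ D / (\<Prod>v\<in>B j \<inter> B j'. min (x v) 1)) \<le> (\<Sum>j<t. t * y ^ D + D)"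
    using row by (intro sum_mono) auto
  then show ?thesis
    by simp
qed

lemma min_quarter_le_div_add:
  fixes \<mu> d L :: real
  assumes "0 \<le> \<mu>" and "0 < d" and "2 * d \<le> L"
  shows "min (1/4) (\<mu> / L) \<le> \<mu> / (\<mu> + d)"
proof (cases "d \<le> \<mu>")
  case True
  then have "1/4 \<le> \<mu> / (\<mu> + d)"
    using \<open>0 < d\<close> by (simp add: field_simps)
  then show ?thesis
    by linarith
next
  case False
  then have "\<mu> / L \<le> \<mu> / (\<mu> + d)"
    using assms by (intro divide_left_mono) auto
  then show ?thesis
    by linarith
qed

lemma finite_Wset: "finite (Wset n D)"
proof (rule finite_subset)
  show "Wset n D \<subseteq> (\<Union>k\<in>{1..numBlocks n D}. {k} \<times> {..<blockSize n D k})"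
    by (auto simp: Wset_def)
qed auto

lemma finite_potEdges: "finite (potEdges n D)"
  by (rule finite_subset[of _ "Pow (Wset n D)"]) (auto simp: potEdges_def finite_Wset)

lemma edgeP_commute: "edgeP n D i k = edgeP n D k i"
proof -
  have "- 1 / real D + real D powr - real i + real D powr - real k
      = - 1 / real D + real D powr - real k + real D powr - real i"
    by simp
  then show ?thesis
    by (simp only: edgeP_def)
qed

lemma edgeProb_doubleton: "edgeProb n D {b, u} = edgeP n D (fst u) (fst b)"
  by (cases "fst b \<le> fst u") (auto simp: edgeProb_def min_def max_def edgeP_commute)

lemma edgeP_nonneg:
  assumes "3 \<le> n"
  shows "0 \<le> edgeP n D i k"
proof -
  have "ln 3 \<le> ln (real n)"
    using assms by simp
  then have "1 < ln (real n)"
    using ln3_gt_1 by linarith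
  then show ?thesis
    unfolding edgeP_def by (simp add: ln_gt_zero)
qed

lemma edgeP_le_one: "edgeP n D i k \<le> 1"
  by (simp add: edgeP_def)

lemma prob_blockModel_all_edges:
  assumes "3 \<le> n" and "F \<subseteq> potEdges n D"
  shows "measure_pmf.prob (blockModel n D) {\<Gamma>. \<forall>e\<in>F. \<Gamma> e} = (\<Prod>e\<in>F. edgeProb n D e)"
  unfolding blockModel_def using assms
  by (intro measure_Pi_pmf_bernoulli_all) (auto simp: finite_potEdges edgeProb_def edgeP_nonneg edgeP_le_one)

lemma prob_blockModel_adjacent_all:
  assumes "3 \<le> n" and u: "u \<in> Wset n D" and S: "S \<subseteq> Wset n D" "u \<notin> S"
  shows "measure_pmf.prob (blockModel n D) {\<Gamma>. \<forall>b\<in>S. \<Gamma> {b, u}}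
           = (\<Prod>b\<in>S. edgeP n D (fst u) (fst b))"
proof -
  have inj: "inj_on (\<lambda>b. {b, u}) S"
    using S by (auto simp: inj_on_def doubleton_eq_iff)
  have "(\<lambda>b. {b, u}) ` S \<subseteq> potEdges n D"
    using u S unfolding potEdges_def by blast
  then have "measure_pmf.prob (blockModel n D) {\<Gamma>. \<forall>e\<in>(\<lambda>b. {b, u}) ` S. \<Gamma> e}
      = (\<Prod>e\<in>(\<lambda>b. {b, u}) ` S. edgeProb n D e)"
    by (rule prob_blockModel_all_edges[OF \<open>3 \<le> n\<close>])
  then show ?thesis
    by (simp add: prod.reindex[OF inj] edgeProb_doubleton)
qed

lemma commonNbr_iff:
  assumes "u \<notin> B"
  shows "u \<in> commonNbr n D \<Gamma> B \<longleftrightarrow> u \<in> Wset n D \<and> (\<forall>b\<in>B. \<Gamma> {b, u})"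
  using assms by (auto simp: commonNbr_def adj_def)

lemma Delta_eq_pow:
  assumes "0 < n" and "0 < D"
  shows "(real n powr (real D powr - real i)) ^ D = Delta n D i"
proof -
  have "real D * real D powr - real i = real D powr (1 - real i)"
    using assms by (simp add: powr_diff powr_minus divide_inverse)
  then show ?thesis
    using assms by (simp add: Delta_def powr_power)
qed

lemma prob_adjacent_to_some_ge:
  fixes B :: "nat \<Rightarrow> vtx set" and y :: real
  assumes "3 \<le> n" and "0 < D" and "0 < y"
    and edge: "\<And>i. edgeP n D k i = min (y * real n powr (real D powr - real i)) 1"
    and u: "u \<in> block n D k"
    and B: "\<And>j. j < t \<Longrightarrow> B j \<subseteq> Wset n D \<and> card (B j) \<le> D \<and> u \<notin> B j"
    and mult: "\<And>w. real (card {j. j < t \<and> w \<in> B j}) \<le> Delta n D (fst w)"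
  shows "t * y ^ D / (t * y ^ D + D)
           \<le> measure_pmf.prob (blockModel n D) (\<Union>j<t. {\<Gamma>. \<forall>b\<in>B j. \<Gamma> {b, u}})"
proof -
  define x where "x = (\<lambda>v::vtx. y * real n powr (real D powr - real (fst v)))"
  define Q where "Q = (\<lambda>S. \<Prod>v\<in>S. min (x v) 1)"
  define A where "A = (\<lambda>j. {\<Gamma>. \<forall>b\<in>B j. \<Gamma> {b, u}})"
  define c where "c = (\<lambda>j. y ^ D / Q (B j))"
  define \<mu> where "\<mu> = t * y ^ D"
  have x_pos: "0 < x v" for v
    using \<open>0 < y\<close> \<open>3 \<le> n\<close> by (simp add: x_def)
  have Q_pos: "0 < Q S" for S
    using x_pos by (simp add: Q_def prod_pos)
  have B_finite: "finite (B j)" if "j < t" for j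
    using B[OF that] finite_Wset finite_subset by blast
  have prob_A: "measure_pmf.prob (blockModel n D) {\<Gamma>. \<forall>b\<in>S. \<Gamma> {b, u}} = Q S"
    if "S \<subseteq> Wset n D" "u \<notin> S" for S
    using prob_blockModel_adjacent_all[OF \<open>3 \<le> n\<close> _ that] u
    by (simp add: block_def Q_def x_def edge)
  have first_moment: "(\<Sum>j<t. c j * measure_pmf.prob (blockModel n D) (A j)) = \<mu>"
    using B by (simp add: A_def c_def prob_A \<mu>_def Q_pos[THEN dual_order.strict_implies_not_eq])
  have pair: "c j * c j' * measure_pmf.prob (blockModel n D) (A j \<inter> A j')
      = y ^ D * (y ^ D / Q (B j \<inter> B j'))"
    if "j < t" "j' < t" for j j'
  proof -
    have "Q (B j \<union> B j') * Q (B j \<inter> B j') = Q (B j) * Q (B j')"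
      unfolding Q_def using B_finite that by (intro prod.union_inter)
    moreover have "A j \<inter> A j' = {\<Gamma>. \<forall>b\<in>B j \<union> B j'. \<Gamma> {b, u}}"
      by (auto simp: A_def)
    ultimately show ?thesis
      using B[OF that(1)] B[OF that(2)] Q_pos[of "B j"] Q_pos[of "B j'"] Q_pos[of "B j \<inter> B j'"]
      by (simp add: c_def prob_A field_simps)
  qed
  have "(\<Sum>j<t. \<Sum>j'<t. c j * c j' * measure_pmf.prob (blockModel n D) (A j \<inter> A j'))
      = y ^ D * (\<Sum>j<t. \<Sum>j'<t. y ^ D / Q (B j \<inter> B j'))"
    by (simp add: pair sum_distrib_left)
  also have "\<dots> \<le> y ^ D * (t * (t * y ^ D + D))"
    unfolding Q_def x_def
    using B_finite B mult \<open>3 \<le> n\<close> \<open>0 < D\<close> \<open>0 < y\<close>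
    by (intro mult_left_mono sum_pair_ratio_le[where \<Delta> = "\<lambda>v. Delta n D (fst v)"])
       (auto simp: Delta_def power_mult_distrib Delta_eq_pow)
  finally have second_moment: "(\<Sum>j<t. \<Sum>j'<t. c j * c j' * measure_pmf.prob (blockModel n D) (A j \<inter> A j'))
      \<le> \<mu> * (\<mu> + D)"
    by (simp add: \<mu>_def algebra_simps)
  have "\<mu> / (\<mu> + D) \<le> measure_pmf.prob (blockModel n D) (\<Union>j<t. A j)"
    using first_moment second_moment \<open>0 < y\<close> \<open>0 < D\<close>
    by (intro measure_pmf.prob_Union_ge_of_second_moment) (auto simp: \<mu>_def)
  then show ?thesis
    by (simp add: A_def \<mu>_def)
qed

lemma prob_common_nbr_ge:
  fixes y :: real
  assumes "3 \<le> n" and "0 < D" and "0 < y"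
    and edge: "\<And>i. edgeP n D k i = min (y * real n powr (real D powr - real i)) 1"
    and u: "u \<in> block n D k" "u \<notin> \<Union>(set_mset \<B>)"
    and wb: "wellBehaved n D sb \<B>"
  shows "size \<B> * y ^ D / (size \<B> * y ^ D + D)
           \<le> measure_pmf.prob (blockModel n D) {\<Gamma>. \<exists>B \<in># \<B>. u \<in> commonNbr n D \<Gamma> B}"
proof -
  obtain xs where xs: "mset xs = \<B>"
    using ex_mset by blast
  define t where "t = length xs"
  have set_\<B>: "set_mset \<B> = (\<lambda>j. xs ! j) ` {..<t}"
    using xs by (auto simp: t_def set_conv_nth)
  then have "{\<Gamma>. \<exists>B \<in># \<B>. u \<in> commonNbr n D \<Gamma> B} = (\<Union>j<t. {\<Gamma>. \<forall>b\<in>xs ! j. \<Gamma> {b, u}})"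
    using u by (auto simp: block_def commonNbr_iff)
  moreover have "size \<B> = t"
    using xs by (auto simp: t_def)
  moreover have "real (card {j. j < t \<and> w \<in> xs ! j}) \<le> Delta n D (fst w)" for w
  proof (cases "w \<in> Wset n D")
    case True
    have "card {j. j < t \<and> w \<in> xs ! j} = size (filter_mset (\<lambda>B. w \<in> B) \<B>)"
      by (simp add: t_def length_filter_conv_card flip: xs mset_filter)
    then show ?thesis
      using True wb by (auto simp: wellBehaved_def block_def Wset_def)
  next
    case False
    then have "{j. j < t \<and> w \<in> xs ! j} = {}"
      using set_\<B> wb by (auto simp: wellBehaved_def)
    then show ?thesis
      unfolding Delta_def by (metis card.empty of_nat_0 powr_ge_zero)
  qed
  ultimately show ?thesis
    using set_\<B> wb u assms(1-4)
    by (auto simp: wellBehaved_def intro!: prob_adjacent_to_some_ge)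
qed

lemma edge_scale_pow:
  assumes "1 < n" and "0 < D"
  shows "(real n powr (- 1 / real D + real D powr - real k) * ln (real n) powr (2 / real D) * l ^ 3) ^ D
           = real n powr (real D powr (1 - real k) - 1) * (ln (real n))\<^sup>2 * l ^ (3 * D)"
proof -
  have "real D * (- 1 / real D + real D powr - real k) = real D powr (1 - real k) - 1"
    using assms by (simp add: powr_diff powr_minus divide_inverse algebra_simps)
  moreover have "(ln (real n) powr (2 / real D)) ^ D = (ln (real n))\<^sup>2"
    using assms by (simp add: powr_power powr_realpow)
  ultimately show ?thesis
    using assms by (simp add: power_mult_distrib powr_power power_mult)
qed

theorem lemma2p7:
  fixes D :: nat
  assumes "D \<ge> 2"
  shows "\<exists>n0. \<forall>n \<ge> n0. \<forall>(t::nat) (\<B>::vtx set multiset) sb k u.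
     1 \<le> t \<and> t \<le> n \<and> size \<B> = t \<and>
     validPartition n D sb \<and> wellBehaved n D sb \<B> \<and>
     1 \<le> k \<and> k \<le> numBlocks n D \<and>
     u \<in> block n D k \<and> u \<notin> \<Union>(set_mset \<B>) \<longrightarrow>
     measure_pmf.prob (blockModel n D) {\<Gamma>. \<exists>B \<in># \<B>. u \<in> commonNbr n D \<Gamma> B}
       \<ge> min (1/4) (real t * real n powr (real D powr (1 - real k) - 1)
                     * (ln (real n))^2 * (ln (ln (real n)))^D)"
proof -
  have "\<forall>\<^sub>F n in sequentially. 3 \<le> n \<and> 2 * real D \<le> ln (ln (real n))"
    by (intro eventually_conj eventually_ge_at_top) real_asymp
  then obtain n0 where n0: "\<And>n. n0 \<le> n \<Longrightarrow> 3 \<le> n \<and> 2 * real D \<le> ln (ln (real n))"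
    by (auto simp: eventually_sequentially)
  show ?thesis
  proof (intro exI[of _ n0] allI impI, elim conjE)
    fix n t \<B> sb k u
    assume "n0 \<le> n" and t: "size \<B> = t" and wb: "wellBehaved n D sb \<B>"
      and u: "u \<in> block n D k" "u \<notin> \<Union>(set_mset \<B>)"
    define E where "E = {\<Gamma>. \<exists>B \<in># \<B>. u \<in> commonNbr n D \<Gamma> B}"
    define l where "l = ln (ln (real n))"
    define y where
      "y = real n powr (- 1 / real D + real D powr - real k) * ln (real n) powr (2 / real D) * l ^ 3"
    have "3 \<le> n" and "2 * real D \<le> l"
      using n0[OF \<open>n0 \<le> n\<close>] by (simp_all add: l_def)
    then have "0 < l" "0 < y" and "2 * real D \<le> l ^ (2 * D)"
      using \<open>D \<ge> 2\<close> by (auto simp: y_def intro!: order_trans[OF _ self_le_power])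
    have "edgeP n D k i = min (y * real n powr (real D powr - real i)) 1" for i
      by (simp add: edgeP_def y_def l_def powr_add ac_simps)
    then have "t * y ^ D / (t * y ^ D + D) \<le> measure_pmf.prob (blockModel n D) E"
      using prob_common_nbr_ge[OF \<open>3 \<le> n\<close> _ \<open>0 < y\<close> _ u wb] \<open>D \<ge> 2\<close> t by (simp add: E_def)
    moreover have "t * y ^ D / l ^ (2 * D)
        = real t * real n powr (real D powr (1 - real k) - 1) * (ln (real n))\<^sup>2 * l ^ D"
      using edge_scale_pow[of n D k l] \<open>3 \<le> n\<close> \<open>D \<ge> 2\<close> \<open>0 < l\<close>
      by (simp add: y_def power_add[symmetric] field_simps)
    ultimately show "min (1/4) (real t * real n powr (real D powr (1 - real k) - 1) * (ln (real n))^2 * l ^ D)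
        \<le> measure_pmf.prob (blockModel n D) E"
      using min_quarter_le_div_add[of "t * y ^ D" D "l ^ (2 * D)"] \<open>0 < y\<close> \<open>2 * real D \<le> l ^ (2 * D)\<close> \<open>D \<ge> 2\<close>
      by simp
  qed
qed

end
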